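(* Let $n\ge1$ be an integer, $b_a>0$, $b_v>0$, $c>0$, and consider the system on $[0,1]^2$ $$\dot p=p(1-p)\Big(\frac{b_a}{n+1}-q(b_v-c)\Big),\qquad \dot q=q(1-q)\Big(\frac{b_v}{n+1}\sum_{k=0}^n p^k-c\Big),$$ with initial condition $p(0),q(0)\in(0,1)$. (i) If $b_a>(b_v-c)(n+1)$, then $p(t)\to 1$ (the population converges to all glycolytic). (ii) If $b_a<(b_v-c)(n+1)$ and $b_v>c(n+1)$, then $q(t)\to1$ and $p(t)\to0$ (the population converges to all VEGF (over)producers).
   Context: This system is the replicator dynamics of the double goods game in factored form: $p$ is the proportion of glycolytic cells and $q$ the proportion of VEGF (over)producers among the aerobic cells; $b_a$ is the benefit per unit of acidification, $b_v$ the benefit per unit of vascularization, $c$ the cost of (over)producing VEGF, and $n$ the number of interaction partners. *)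

theory Defs
  imports Complex_Main
begin

definition double_goods_solution ::
  "nat \<Rightarrow> real \<Rightarrow> real \<Rightarrow> real \<Rightarrow> (real \<Rightarrow> real) \<Rightarrow> (real \<Rightarrow> real) \<Rightarrow> bool" where
  "double_goods_solution n ba bv c p q \<longleftrightarrow>
     (\<forall>t\<ge>0.
        (p has_real_derivative
            (p t * (1 - p t) * (ba / (real n + 1) - q t * (bv - c)))) (at t within {0..}) \<and>
        (q has_real_derivative
            (q t * (1 - q t) * (bv / (real n + 1) * (\<Sum>k=0..n. p t ^ k) - c))) (at t within {0..}))"

end

theory Submission
  imports Defs "HOL-Analysis.Analysis" "HOL-Real_Asymp.Real_Asymp"
begin

text \<open>Both equations have the one-dimensional replicator form \<open>y' = y (1 - y) k(t)\<close>, where the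
  advantage \<open>k\<close> of the focal strategy depends on the other variable.  Solutions of such an
  equation stay in \<open>(0,1)\<close>, and once \<open>k\<close> is bounded below by a positive constant, \<open>1 - y\<close> decays
  exponentially, so \<open>y \<rightarrow> 1\<close>.  Under (i) the advantage of glycolysis is at least
  \<open>min (b\<^sub>a/(n+1)) (b\<^sub>a/(n+1) - (b\<^sub>v - c)) > 0\<close> for every \<open>q \<in> [0,1]\<close>.  Under (ii) the
  advantage of VEGF production is at least \<open>b\<^sub>v/(n+1) - c > 0\<close> because the geometric sum is at
  least 1, so \<open>q \<rightarrow> 1\<close>; the advantage of glycolysis then tends to \<open>b\<^sub>a/(n+1) - (b\<^sub>v - c) < 0\<close>, and
  applying the same argument to \<open>1 - p\<close> gives \<open>p \<rightarrow> 0\<close>.\<close>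

definition replicator_solution :: "(real \<Rightarrow> real) \<Rightarrow> (real \<Rightarrow> real) \<Rightarrow> bool" where
  "replicator_solution k y \<longleftrightarrow>
     (\<forall>t\<ge>0. (y has_real_derivative (y t * (1 - y t) * k t)) (at t within {0..}))"

lemma replicator_solutionD:
  assumes "replicator_solution k y" and "t \<ge> 0"
  shows "(y has_real_derivative (y t * (1 - y t) * k t)) (at t within {0..})"
  using assms unfolding replicator_solution_def by blast

lemma replicator_solution_continuous_on:
  assumes "replicator_solution k y"
  shows "continuous_on {0..} y"
  using assms unfolding replicator_solution_def by (auto intro: DERIV_continuous_on)

lemma replicator_solution_complement:
  assumes "replicator_solution k y"
  shows "replicator_solution (\<lambda>t. - k t) (\<lambda>t. 1 - y t)"
  unfolding replicator_solution_def
proof (intro allI impI)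
  fix t :: real assume "t \<ge> 0"
  from DERIV_diff[OF DERIV_const replicator_solutionD[OF assms this], of 1]
  show "((\<lambda>t. 1 - y t) has_real_derivative (1 - y t) * (1 - (1 - y t)) * - k t)
      (at t within {0..})"
    by (simp add: algebra_simps)
qed

lemma antitone_from_nonpos_derivative:
  fixes f f' :: "real \<Rightarrow> real"
  assumes deriv: "\<And>t. t \<ge> 0 \<Longrightarrow> (f has_real_derivative f' t) (at t within {0..})"
    and nonpos: "\<And>t. a < t \<Longrightarrow> f' t \<le> 0" and "0 \<le> a" "a \<le> s" "s \<le> t"
  shows "f t \<le> f s"
proof (rule DERIV_nonpos_imp_decreasing_open[of s t f])
  fix x assume x: "s < x" "x < t"
  have "x > a" "x \<ge> 0"
    using x assms by auto
  moreover have "at x within {0..} = at x"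
    using \<open>x > a\<close> \<open>0 \<le> a\<close> by (intro at_within_interior) auto
  ultimately have "DERIV f x :> f' x"
    using deriv[of x] by simp
  with nonpos[OF \<open>x > a\<close>] show "\<exists>y. DERIV f x :> y \<and> y \<le> 0"
    by blast
next
  have "continuous_on {0..} f"
    using deriv by (auto intro: DERIV_continuous_on)
  then show "continuous_on {s..t} f"
    by (rule continuous_on_subset) (use assms in auto)
qed fact

text \<open>The integrating factor \<open>exp (- \<integral>\<^sub>0\<^sup>t a)\<close> makes \<open>y\<close> a constant multiple of an exponential.\<close>

lemma linear_ode_positive:
  fixes y a :: "real \<Rightarrow> real"
  assumes deriv: "\<And>t. t \<ge> 0 \<Longrightarrow> (y has_real_derivative (a t * y t)) (at t within {0..})"
    and "continuous_on {0..} a" and "y 0 > 0" and "t \<ge> 0"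
  shows "y t > 0"
proof -
  define A where "A s = integral {0..s} a" for s
  have "continuous_on {0..t} a"
    by (rule continuous_on_subset[OF assms(2)]) auto
  then have dA: "(A has_real_derivative a s) (at s within {0..t})" if "s \<in> {0..t}" for s
    unfolding A_def[abs_def] by (rule integral_has_real_derivative[OF _ that])
  have dy: "(y has_real_derivative (a s * y s)) (at s within {0..t})" if "s \<in> {0..t}" for s
    by (rule DERIV_subset[OF deriv]) (use that in auto)
  have "((\<lambda>s. y s * exp (- A s)) has_real_derivative 0) (at s within {0..t})" if "s \<in> {0..t}" for s
    by (rule derivative_eq_intros dy[OF that] dA[OF that] refl | simp)+
  then obtain C where C: "\<forall>s\<in>{0..t}. y s * exp (- A s) = C"
    using has_field_derivative_zero_constant[of "{0..t}" "\<lambda>s. y s * exp (- A s)"] by auto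
  have "y t * exp (- A t) = y 0"
    using C[rule_format, of 0] C[rule_format, of t] \<open>t \<ge> 0\<close> by (simp add: A_def)
  then have "y t = y 0 * exp (A t)"
    by (simp add: exp_minus field_simps)
  with \<open>y 0 > 0\<close> show ?thesis by simp
qed

lemma replicator_solution_pos:
  assumes sol: "replicator_solution k y" and "continuous_on {0..} k"
    and "y 0 > 0" and "t \<ge> 0"
  shows "y t > 0"
proof (rule linear_ode_positive[where a = "\<lambda>t. (1 - y t) * k t" and y = y])
  show "(y has_real_derivative (1 - y s) * k s * y s) (at s within {0..})" if "s \<ge> 0" for s
    using replicator_solutionD[OF sol that] by (rule DERIV_cong) (simp add: algebra_simps)
  show "continuous_on {0..} (\<lambda>t. (1 - y t) * k t)"
    using assms(2) replicator_solution_continuous_on[OF sol] by (intro continuous_intros)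
qed fact+

lemma replicator_solution_in_unit_interval:
  assumes sol: "replicator_solution k y" and "continuous_on {0..} k"
    and "0 < y 0" "y 0 < 1" and "t \<ge> 0"
  shows "0 < y t \<and> y t < 1"
proof -
  have "continuous_on {0..} (\<lambda>t. - k t)"
    using assms(2) by (intro continuous_intros)
  then have "1 - y t > 0"
    using replicator_solution_pos[OF replicator_solution_complement[OF sol]] assms(4,5) by simp
  with replicator_solution_pos[OF sol assms(2,3,5)] show ?thesis by simp
qed

text \<open>Once \<open>k \<ge> \<delta>\<close> from time \<open>T\<close> on, \<open>y\<close> is increasing there, so \<open>y (1 - y) k \<ge> \<delta> y(T) (1 - y)\<close>
  and \<open>1 - y\<close> decays at least at the exponential rate \<open>\<delta> y(T)\<close>.\<close>

lemma replicator_solution_tendsto_one: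
  assumes sol: "replicator_solution k y" and "continuous_on {0..} k"
    and "0 < y 0" "y 0 < 1" and "\<delta> > 0" and "\<forall>\<^sub>F t in at_top. k t \<ge> \<delta>"
  shows "(y \<longlongrightarrow> 1) at_top"
proof -
  obtain T where T: "T \<ge> 0" and kT: "\<And>t. t \<ge> T \<Longrightarrow> k t \<ge> \<delta>"
    using assms(6) unfolding eventually_at_top_linorder
    by (metis max.cobounded1 max.cobounded2 order_trans)
  note deriv = replicator_solutionD[OF sol]
  have bounds: "0 < y t" "y t < 1" if "t \<ge> 0" for t
    using replicator_solution_in_unit_interval[OF sol assms(2-4) that] by auto
  have incr: "y T \<le> y t" if "t \<ge> T" for t
  proof -
    have "- y t \<le> - y T"
    proof (rule antitone_from_nonpos_derivative
        [where f = "\<lambda>t. - y t" and f' = "\<lambda>t. - (y t * (1 - y t) * k t)"])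
      show "((\<lambda>t. - y t) has_real_derivative - (y t * (1 - y t) * k t)) (at t within {0..})"
        if "t \<ge> 0" for t
        by (rule DERIV_minus[OF deriv[OF that]])
      show "- (y t * (1 - y t) * k t) \<le> 0" if "T < t" for t
        using bounds[of t] kT[of t] that T \<open>\<delta> > 0\<close> by (auto intro!: mult_nonneg_nonneg)
    qed (use T that in auto)
    then show ?thesis by simp
  qed
  define e where "e = \<delta> * y T"
  have "e > 0"
    using \<open>\<delta> > 0\<close> bounds[OF T] by (simp add: e_def)
  have decay: "(1 - y t) * exp (e * t) \<le> (1 - y T) * exp (e * T)" if "t \<ge> T" for t
  proof (rule antitone_from_nonpos_derivative
      [where f = "\<lambda>t. (1 - y t) * exp (e * t)"
         and f' = "\<lambda>t. (1 - y t) * exp (e * t) * (e - y t * k t)"])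
    show "((\<lambda>t. (1 - y t) * exp (e * t)) has_real_derivative
            (1 - y t) * exp (e * t) * (e - y t * k t)) (at t within {0..})" if "t \<ge> 0" for t
      by (rule derivative_eq_intros deriv[OF that] refl | simp add: algebra_simps)+
    show "(1 - y t) * exp (e * t) * (e - y t * k t) \<le> 0" if "T < t" for t
    proof -
      have "\<delta> * y T \<le> k t * y t"
        using kT[of t] incr[of t] that \<open>\<delta> > 0\<close> bounds[OF T] by (intro mult_mono) auto
      then have "e \<le> y t * k t"
        by (simp add: e_def mult.commute)
      moreover have "0 \<le> (1 - y t) * exp (e * t)"
        using bounds[of t] that T by simp
      ultimately show ?thesis by (simp add: mult_nonneg_nonpos)
    qed
  qed (use T that in auto)
  have "((\<lambda>t. (1 - y T) * exp (e * T) * exp (- (e * t))) \<longlongrightarrow> 0) at_top"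
    using \<open>e > 0\<close> by real_asymp
  moreover have "\<forall>\<^sub>F t in at_top.
      0 \<le> 1 - y t \<and> 1 - y t \<le> (1 - y T) * exp (e * T) * exp (- (e * t))"
    using eventually_ge_at_top[of T]
  proof eventually_elim
    case (elim t)
    then show ?case
      using bounds[of t] decay[of t] T by (simp add: exp_minus field_simps)
  qed
  ultimately have "((\<lambda>t. 1 - y t) \<longlongrightarrow> 0) at_top"
    unfolding eventually_conj_iff by (elim conjE) (rule tendsto_sandwich[OF _ _ tendsto_const])
  then show ?thesis
    using tendsto_diff[OF tendsto_const, of "\<lambda>t. 1 - y t" 0 at_top 1] by simp
qed

lemma replicator_solution_tendsto_zero:
  assumes sol: "replicator_solution k y" and "continuous_on {0..} k"
    and "0 < y 0" "y 0 < 1" and "\<eta> > 0" and "\<forall>\<^sub>F t in at_top. k t \<le> - \<eta>"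
  shows "(y \<longlongrightarrow> 0) at_top"
proof -
  have "((\<lambda>t. 1 - y t) \<longlongrightarrow> 1) at_top"
  proof (rule replicator_solution_tendsto_one[OF replicator_solution_complement[OF sol]])
    show "continuous_on {0..} (\<lambda>t. - k t)"
      using assms(2) by (intro continuous_intros)
    show "\<forall>\<^sub>F t in at_top. - k t \<ge> \<eta>"
      using assms(6) by eventually_elim simp
  qed (use assms(3-5) in auto)
  then show ?thesis
    using tendsto_diff[OF tendsto_const, of "\<lambda>t. 1 - y t" 1 at_top 1] by simp
qed

lemma affine_lower_bound_on_unit_interval:
  fixes a b x :: "'a :: linordered_idom"
  assumes "0 \<le> x" "x \<le> 1"
  shows "min a (a - b) \<le> a - x * b"
proof (cases "b \<le> 0")
  case True
  then show ?thesis using assms by (simp add: mult_nonneg_nonpos)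
next
  case False
  then have "x * b \<le> b" using assms by (simp add: mult_left_le_one_le)
  then show ?thesis by simp
qed

lemma one_le_geometric_sum:
  fixes x :: "'a :: linordered_semidom"
  assumes "0 \<le> x"
  shows "1 \<le> (\<Sum>k=0..n. x ^ k)"
  using member_le_sum[of 0 "{0..n}" "\<lambda>k. x ^ k"] assms by auto

locale double_goods =
  fixes n :: nat and ba bv c :: real and p q :: "real \<Rightarrow> real"
  assumes solution: "double_goods_solution n ba bv c p q"
    and p0: "0 < p 0" "p 0 < 1" and q0: "0 < q 0" "q 0 < 1"
begin

definition glycolytic_advantage :: "real \<Rightarrow> real" where
  "glycolytic_advantage t = ba / (real n + 1) - q t * (bv - c)"

definition producer_advantage :: "real \<Rightarrow> real" where
  "producer_advantage t = bv / (real n + 1) * (\<Sum>k=0..n. p t ^ k) - c"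

lemma replicator_solution_p: "replicator_solution glycolytic_advantage p"
  and replicator_solution_q: "replicator_solution producer_advantage q"
  using solution
  unfolding double_goods_solution_def replicator_solution_def
    glycolytic_advantage_def producer_advantage_def
  by blast+

lemma continuous_on_glycolytic_advantage: "continuous_on {0..} glycolytic_advantage"
  unfolding glycolytic_advantage_def[abs_def]
  using replicator_solution_continuous_on[OF replicator_solution_q] by (intro continuous_intros)

lemma continuous_on_producer_advantage: "continuous_on {0..} producer_advantage"
  unfolding producer_advantage_def[abs_def]
  using replicator_solution_continuous_on[OF replicator_solution_p] by (intro continuous_intros)

lemma p_in_unit_interval: "t \<ge> 0 \<Longrightarrow> 0 < p t \<and> p t < 1"
  by (rule replicator_solution_in_unit_interval
      [OF replicator_solution_p continuous_on_glycolytic_advantage p0])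

lemma q_in_unit_interval: "t \<ge> 0 \<Longrightarrow> 0 < q t \<and> q t < 1"
  by (rule replicator_solution_in_unit_interval
      [OF replicator_solution_q continuous_on_producer_advantage q0])

lemma glycolytic_fixation:
  assumes "ba > 0" and "ba > (bv - c) * (real n + 1)"
  shows "(p \<longlongrightarrow> 1) at_top"
proof (rule replicator_solution_tendsto_one
    [OF replicator_solution_p continuous_on_glycolytic_advantage p0])
  show "min (ba / (real n + 1)) (ba / (real n + 1) - (bv - c)) > 0"
    using assms by (simp add: field_simps add_pos_pos)
  show "\<forall>\<^sub>F t in at_top.
      min (ba / (real n + 1)) (ba / (real n + 1) - (bv - c)) \<le> glycolytic_advantage t"
    using eventually_ge_at_top[of 0]
  proof eventually_elim
    case (elim t)
    with q_in_unit_interval[of t] show ?case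
      unfolding glycolytic_advantage_def by (intro affine_lower_bound_on_unit_interval) auto
  qed
qed

lemma producer_fixation:
  assumes "bv > 0" and "ba < (bv - c) * (real n + 1)" and "bv > c * (real n + 1)"
  shows "(q \<longlongrightarrow> 1) at_top \<and> (p \<longlongrightarrow> 0) at_top"
proof
  have "\<forall>\<^sub>F t in at_top. bv / (real n + 1) - c \<le> producer_advantage t"
    using eventually_ge_at_top[of 0]
  proof eventually_elim
    case (elim t)
    have "bv / (real n + 1) * 1 \<le> bv / (real n + 1) * (\<Sum>k=0..n. p t ^ k)"
      using one_le_geometric_sum[of "p t"] p_in_unit_interval[OF elim] \<open>bv > 0\<close>
      by (intro mult_left_mono) auto
    then show ?case by (simp add: producer_advantage_def)
  qed
  moreover have "bv / (real n + 1) - c > 0"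
    using assms(3) by (simp add: field_simps)
  ultimately show q_lim: "(q \<longlongrightarrow> 1) at_top"
    using replicator_solution_tendsto_one
      [OF replicator_solution_q continuous_on_producer_advantage q0] by blast
  define L where "L = ba / (real n + 1) - (bv - c)"
  have "(glycolytic_advantage \<longlongrightarrow> L) at_top"
    unfolding glycolytic_advantage_def[abs_def] L_def using q_lim
    by (auto intro!: tendsto_eq_intros)
  moreover have "L < 0"
    using assms(2) by (simp add: L_def field_simps)
  ultimately have "\<forall>\<^sub>F t in at_top. glycolytic_advantage t < L / 2"
    by (intro order_tendstoD(2)) auto
  moreover have "- L / 2 > 0"
    using \<open>L < 0\<close> by simp
  ultimately show "(p \<longlongrightarrow> 0) at_top"
    by (intro replicator_solution_tendsto_zero
        [OF replicator_solution_p continuous_on_glycolytic_advantage p0, of "- L / 2"])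
      (auto elim: eventually_mono)
qed

end

theorem mainTheorem4:
  fixes n :: nat and ba bv c :: real and p q :: "real \<Rightarrow> real"
  assumes "n \<ge> 1" and "ba > 0" and "bv > 0" and "c > 0"
    and "double_goods_solution n ba bv c p q"
    and "0 < p 0" and "p 0 < 1" and "0 < q 0" and "q 0 < 1"
  shows "(ba > (bv - c) * (real n + 1) \<longrightarrow> (p \<longlongrightarrow> 1) at_top)
       \<and> (ba < (bv - c) * (real n + 1) \<and> bv > c * (real n + 1)
            \<longrightarrow> (q \<longlongrightarrow> 1) at_top \<and> (p \<longlongrightarrow> 0) at_top)"
proof -
  interpret double_goods n ba bv c p q
    using assms(5-9) by unfold_locales
  show ?thesis
    using glycolytic_fixation[OF \<open>ba > 0\<close>] producer_fixation[OF \<open>bv > 0\<close>] by blast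
qed

end
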